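(* Let $n\ge2$, $0<\eta\le\frac14$, and let $A$ be a real symmetric non-negative $n\times n$ matrix with $\det(A)\ge(1-\sqrt\eta)^2$ and $\operatorname{tr}(A)\le n(1+\eta)^{2/n}$. Then $$\|A-\mathrm{Id}\|^2\le4(n-1)^2\sqrt\eta\left(1+\frac{n+10}n\sqrt\eta\right).$$
   Context: $\|\cdot\|$ denotes the Hilbert–Schmidt (Frobenius) norm, $\|B\|^2=\operatorname{tr}(B^tB)$. *)

theory Defs
  imports "HOL-Analysis.Analysis"
begin

definition hs_norm_sq :: "real^'n^'n \<Rightarrow> real" where
  "hs_norm_sq B = trace (transpose B ** B)"

text \<open>Non-negative (positive semidefinite) matrix.\<close>
definition psd :: "real^'n^'n \<Rightarrow> bool" where
  "psd A \<longleftrightarrow> (\<forall>x. 0 \<le> x \<bullet> (A *v x))"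

end

theory Submission
  imports Defs "Jordan_Normal_Form.Schur_Decomposition"
begin

text \<open>Let \<open>x\<^sub>1, \<dots>, x\<^sub>n \<ge> 0\<close> be the eigenvalues of \<open>A\<close> and \<open>s = \<Sum>x\<^sub>i = tr A\<close>. Then
  \<open>\<parallel>A - Id\<parallel>\<^sup>2 = \<Sum>(x\<^sub>i - 1)\<^sup>2 = s\<^sup>2 - 2s + n - \<Sum>\<^sub>i\<^sub>\<noteq>\<^sub>j x\<^sub>i x\<^sub>j\<close>, and the arithmetic-geometric mean
  inequality over the \<open>n(n - 1)\<close> ordered pairs \<open>i \<noteq> j\<close> bounds the last sum from below by
  \<open>n(n - 1) (det A)\<^bsup>2/n\<^esup>\<close>. With \<open>y = \<surd>\<eta>\<close> the hypotheses give
  \<open>(det A)\<^bsup>2/n\<^esup> \<ge> (1 - y)\<^bsup>4/n\<^esup> \<ge> 1 - 4(y + 2y\<^sup>2)/n\<close> and \<open>s \<le> n(1 + \<eta>)\<^bsup>2/n\<^esup> \<le> n + 4\<eta>\<close>, after which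
  the claim is an elementary estimate. The eigenvalues are read off the diagonal of a complex
  Schur triangularisation of \<open>A\<close>; symmetry and non-negativity make them real and non-negative.\<close>

definition off_diagonal :: "nat \<Rightarrow> (nat \<times> nat) set" where
  "off_diagonal n = Sigma {..<n} (\<lambda>i. {..<n} - {i})"

lemma card_off_diagonal: "card (off_diagonal n) = n * (n - 1)"
  unfolding off_diagonal_def by (simp add: card_SigmaI)

lemma sum_off_diagonal_mult:
  fixes x :: "nat \<Rightarrow> 'a::comm_ring_1"
  shows "(\<Sum>(i,j)\<in>off_diagonal n. x i * x j) = (\<Sum>i<n. x i)^2 - (\<Sum>i<n. (x i)^2)"
proof -
  have "(\<Sum>(i,j)\<in>off_diagonal n. x i * x j) = (\<Sum>i<n. \<Sum>j\<in>{..<n} - {i}. x i * x j)"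
    unfolding off_diagonal_def by (subst sum.Sigma) auto
  also have "\<dots> = (\<Sum>i<n. x i * (\<Sum>j<n. x j) - (x i)^2)"
    by (simp add: sum_distrib_left[symmetric] sum_diff1 algebra_simps power2_eq_square)
  also have "\<dots> = (\<Sum>i<n. x i)^2 - (\<Sum>i<n. (x i)^2)"
    by (simp add: sum_subtractf sum_distrib_right[symmetric] power2_eq_square)
  finally show ?thesis .
qed

lemma prod_off_diagonal_mult:
  fixes x :: "nat \<Rightarrow> 'a::comm_semiring_1"
  shows "(\<Prod>(i,j)\<in>off_diagonal n. x i * x j) = (\<Prod>i<n. x i) ^ (2 * (n - 1))"
proof -
  have transposed: "(\<Prod>(i,j)\<in>off_diagonal n. x j) = (\<Prod>(i,j)\<in>off_diagonal n. x i)"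
    by (rule prod.reindex_bij_witness[where i="\<lambda>(i,j). (j,i)" and j="\<lambda>(i,j). (j,i)"])
       (auto simp: off_diagonal_def)
  have row: "(\<Prod>(i,j)\<in>off_diagonal n. x i) = (\<Prod>i<n. x i) ^ (n - 1)"
  proof -
    have "(\<Prod>(i,j)\<in>off_diagonal n. x i) = (\<Prod>i<n. \<Prod>j\<in>{..<n} - {i}. x i)"
      unfolding off_diagonal_def by (subst prod.Sigma) auto
    also have "\<dots> = (\<Prod>i<n. x i) ^ (n - 1)"
      by (simp add: card_Diff_singleton prod_power_distrib[symmetric])
    finally show ?thesis .
  qed
  have "(\<Prod>(i,j)\<in>off_diagonal n. x i * x j)
        = (\<Prod>(i,j)\<in>off_diagonal n. x i) * (\<Prod>(i,j)\<in>off_diagonal n. x j)"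
    by (simp add: prod.distrib case_prod_beta)
  also have "\<dots> = (\<Prod>i<n. x i) ^ (n - 1) * (\<Prod>i<n. x i) ^ (n - 1)"
    unfolding transposed row ..
  also have "\<dots> = (\<Prod>i<n. x i) ^ (2 * (n - 1))"
    by (simp only: mult_2 power_add)
  finally show ?thesis .
qed

lemma arith_geom_mean_off_diagonal:
  fixes x :: "nat \<Rightarrow> real"
  assumes n: "n \<ge> 2" and pos: "\<And>i. i < n \<Longrightarrow> 0 < x i"
  shows "real n * (real n - 1) * (\<Prod>i<n. x i) powr (2 / real n)
         \<le> (\<Sum>i<n. x i)^2 - (\<Sum>i<n. (x i)^2)"
proof -
  define T where "T = off_diagonal n"
  define P where "P = (\<Prod>i<n. x i)"
  have card_T: "real (card T) = real n * (real n - 1)"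
    using n by (simp add: T_def card_off_diagonal of_nat_diff)
  have "card T > 0" using n by (simp add: T_def card_off_diagonal)
  then have T: "finite T" "T \<noteq> {}" using card_gt_0_iff by blast+
  have "P > 0" unfolding P_def by (rule prod_pos) (use pos in auto)
  then have "(P ^ (2 * (n - 1))) powr (1 / card T) = P powr (real (2 * (n - 1)) * (1 / card T))"
    by (simp add: powr_realpow[symmetric] powr_powr)
  also have "real (2 * (n - 1)) * (1 / card T) = 2 / real n"
    using n by (simp add: card_T of_nat_diff field_simps)
  finally have "P powr (2 / real n) = (P ^ (2 * (n - 1))) powr (1 / card T)" ..
  also have "\<dots> = (\<Prod>(i,j)\<in>T. x i * x j) powr (1 / card T)"
    by (simp add: T_def P_def prod_off_diagonal_mult)
  also have "\<dots> \<le> (\<Sum>(i,j)\<in>T. x i * x j / card T)"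
    using arith_geom_mean[OF T, of "\<lambda>(i,j). x i * x j"] pos
    by (auto simp: T_def off_diagonal_def case_prod_beta less_imp_le)
  also have "\<dots> = (\<Sum>(i,j)\<in>T. x i * x j) / card T"
    by (simp add: sum_divide_distrib split_def)
  also have "\<dots> = ((\<Sum>i<n. x i)^2 - (\<Sum>i<n. (x i)^2)) / card T"
    by (simp only: T_def sum_off_diagonal_mult)
  finally show ?thesis
    using n by (simp add: P_def card_T field_simps)
qed

lemma one_plus_powr_two_div_le:
  fixes N \<eta> :: real
  assumes "N > 0" "0 \<le> \<eta>" "4 * \<eta> \<le> N"
  shows "(1 + \<eta>) powr (2 / N) \<le> 1 + 4 * \<eta> / N"
proof -
  have "ln (1 + \<eta>) \<le> \<eta>" using assms by (intro ln_add_one_self_le_self) auto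
  then have "2 / N * ln (1 + \<eta>) \<le> 2 / N * \<eta>" using assms by (intro mult_left_mono) auto
  then have "(1 + \<eta>) powr (2 / N) \<le> exp (2 * \<eta> / N)"
    using assms by (simp add: powr_def)
  also have "\<dots> \<le> 1 + 2 * (2 * \<eta> / N)"
    using assms by (intro real_exp_bound_lemma) (auto simp: field_simps)
  finally show ?thesis by simp
qed

lemma one_minus_power2_powr_two_div_ge:
  fixes N y :: real
  assumes "N > 0" "0 \<le> y" "y \<le> 1/2"
  shows "1 - 4 * (y + 2 * y^2) / N \<le> ((1 - y)^2) powr (2 / N)"
proof -
  have "- y - 2 * y^2 \<le> ln (1 - y)" using assms by (intro ln_one_minus_pos_lower_bound) auto
  then have "4 / N * (- y - 2 * y^2) \<le> 4 / N * ln (1 - y)"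
    using assms by (intro mult_left_mono) auto
  moreover have "4 / N * (- y - 2 * y^2) = - (4 * (y + 2 * y^2) / N)"
    using assms by (simp add: field_simps)
  ultimately have "1 - 4 * (y + 2 * y^2) / N \<le> 1 + 4 / N * ln (1 - y)" by linarith
  also have "\<dots> \<le> exp (4 / N * ln (1 - y))" by (rule exp_ge_add_one_self)
  also have "\<dots> = ((1 - y)^2) powr (2 / N)"
    using assms by (simp add: powr_def ln_realpow)
  finally show ?thesis .
qed

lemma deviation_bound_arith:
  fixes N y v :: real
  assumes N: "N \<ge> 2" and y: "0 < y" "y \<le> 1/2" and v: "0 \<le> v" "v \<le> 4 * y^2"
  shows "4 * (N - 1) * (y + 2 * y^2) + 2 * (N - 1) * v + v^2
         \<le> 4 * (N - 1)^2 * y * (1 + (N + 10) / N * y)"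
proof -
  define a b K where "a = (N - 1) * y" and "b = (N - 1) * y^2" and "K = (N - 1) * (N + 10) / N"
  have "y^2 \<le> 1/4" using power_mono[of y "1/2" 2] y by (simp add: power_divide)
  then have "v \<le> 1" using v by linarith
  then have "v^2 \<le> v" using v by (simp add: power2_eq_square mult_left_le)
  also have "\<dots> \<le> 4 * y^2" by (rule v)
  also have "\<dots> \<le> 4 * b" using mult_right_mono[of 1 "N - 1" "y^2"] N by (simp add: b_def)
  finally have v2: "v^2 \<le> 4 * b" .
  have "2 * (N - 1) * v \<le> 2 * (N - 1) * (4 * y^2)" using v N by (intro mult_left_mono) auto
  also have "\<dots> = 8 * b" by (simp add: b_def algebra_simps)
  finally have v1: "2 * (N - 1) * v \<le> 8 * b" .
  have a: "a \<le> (N - 1) * a" using N y by (simp add: a_def mult_right_mono)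
  have "2 * N \<le> N * N" using N by (intro mult_right_mono) auto
  moreover have "(N - 1) * (N + 10) = N * N + 9 * N - 10" by (simp add: algebra_simps)
  ultimately have "5 * N \<le> (N - 1) * (N + 10)" using N by linarith
  then have "5 \<le> K" using N by (simp add: K_def field_simps)
  then have b: "5 * b \<le> K * b" using N by (intro mult_right_mono) (auto simp: b_def)
  have lhs: "4 * (N - 1) * (y + 2 * y^2) = 4 * a + 8 * b" by (simp add: a_def b_def algebra_simps)
  have rhs: "4 * (N - 1)^2 * y * (1 + (N + 10) / N * y) = 4 * ((N - 1) * a) + 4 * (K * b)"
    using N by (simp add: a_def b_def K_def field_simps power2_eq_square)
  show ?thesis unfolding lhs rhs using v1 v2 a b by linarith
qed

lemma sum_power2_diff_one_le:
  fixes x :: "nat \<Rightarrow> real" and \<eta> :: real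
  assumes n: "n \<ge> 2" and \<eta>: "0 < \<eta>" "\<eta> \<le> 1/4" and nonneg: "\<And>i. i < n \<Longrightarrow> 0 \<le> x i"
    and prod: "(1 - sqrt \<eta>)^2 \<le> (\<Prod>i<n. x i)"
    and sum: "(\<Sum>i<n. x i) \<le> real n * (1 + \<eta>) powr (2 / real n)"
  shows "(\<Sum>i<n. (x i - 1)^2)
         \<le> 4 * (real n - 1)^2 * sqrt \<eta> * (1 + (real n + 10) / real n * sqrt \<eta>)"
proof -
  define N y s where "N = real n" and "y = sqrt \<eta>" and "s = (\<Sum>i<n. x i)"
  define c d where "c = (1 + \<eta>) powr (2 / N)" and "d = (\<Prod>i<n. x i) powr (2 / N)"
  have N: "N \<ge> 2" using n by (simp add: N_def)
  have y: "0 < y" "y \<le> 1/2" and \<eta>_eq: "\<eta> = y^2"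
    using \<eta> real_sqrt_le_mono[of \<eta> "1/4"] by (auto simp: y_def real_sqrt_divide)
  have "(1 - y)^2 > 0" using y by simp
  have pos: "0 < x i" if "i < n" for i
  proof (rule ccontr)
    assume "\<not> 0 < x i"
    then have "(\<Prod>i<n. x i) = 0" using nonneg[OF that] that by (intro prod_zero) force+
    then show False using prod \<open>(1 - y)^2 > 0\<close> unfolding y_def by linarith
  qed
  have "1 - 4 * (y + 2 * y^2) / N \<le> ((1 - y)^2) powr (2 / N)"
    using N y by (intro one_minus_power2_powr_two_div_ge) auto
  also have "\<dots> \<le> d"
    unfolding d_def using prod N \<open>(1 - y)^2 > 0\<close> by (intro powr_mono2) (auto simp: y_def)
  finally have d: "1 - 4 * (y + 2 * y^2) / N \<le> d" .
  have "1 \<le> c" unfolding c_def using \<eta> N by (intro ge_one_powr_ge_zero) auto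
  then have c_lower: "N \<le> N * c" using N by simp
  have "N * c \<le> N * (1 + 4 * \<eta> / N)"
    unfolding c_def using \<eta> N by (intro mult_left_mono one_plus_powr_two_div_le) auto
  also have "\<dots> = N + 4 * y^2" using N by (simp add: \<eta>_eq field_simps)
  finally have c_upper: "N * c \<le> N + 4 * y^2" .
  have "s \<le> N * c" using sum by (simp add: s_def N_def c_def)
  moreover have "0 \<le> s" unfolding s_def using nonneg by (intro sum_nonneg) auto
  ultimately have "0 \<le> (N * c - s) * (N * c + s - 2)"
    using N c_lower by (intro mult_nonneg_nonneg; linarith)
  then have s: "s^2 - 2 * s \<le> (N * c)^2 - 2 * (N * c)"
    by (simp add: algebra_simps power2_eq_square)
  have amgm: "N * (N - 1) * d \<le> s^2 - (\<Sum>i<n. (x i)^2)"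
    using arith_geom_mean_off_diagonal[OF n pos] by (simp add: N_def d_def s_def)
  have "(\<Sum>i<n. (x i - 1)^2) = (\<Sum>i<n. (x i)^2) - 2 * s + N"
    by (simp add: s_def N_def power2_diff sum.distrib sum_subtractf sum_distrib_left)
  also have "\<dots> \<le> (N * c)^2 - 2 * (N * c) + N - N * (N - 1) * d"
    using s amgm by linarith
  also have "\<dots> \<le> (N * c)^2 - 2 * (N * c) + N - N * (N - 1) * (1 - 4 * (y + 2 * y^2) / N)"
    using d N by (intro diff_left_mono mult_left_mono) auto
  also have "\<dots> = 4 * (N - 1) * (y + 2 * y^2) + 2 * (N - 1) * (N * c - N) + (N * c - N)^2"
    using N by (simp add: field_simps power2_eq_square)
  also have "\<dots> \<le> 4 * (N - 1)^2 * y * (1 + (N + 10) / N * y)"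
    using c_lower c_upper by (intro deviation_bound_arith[OF N y]) auto
  finally show ?thesis by (simp add: N_def y_def)
qed

lemma sym_psd_eigenvalue_real_nonneg:
  fixes a :: "nat \<Rightarrow> nat \<Rightarrow> real" and e :: complex and v :: "nat \<Rightarrow> complex"
  assumes sym: "\<And>i j. i < n \<Longrightarrow> j < n \<Longrightarrow> a i j = a j i"
    and psd: "\<And>w :: nat \<Rightarrow> real. 0 \<le> (\<Sum>i<n. \<Sum>j<n. w i * a i j * w j)"
    and eigen: "\<And>i. i < n \<Longrightarrow> (\<Sum>j<n. complex_of_real (a i j) * v j) = e * v i"
    and nonzero: "i0 < n" "v i0 \<noteq> 0"
  shows "Im e = 0 \<and> 0 \<le> Re e"
proof -
  define r m where "r i = Re (v i)" and "m i = Im (v i)" for i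
  define S where "S = (\<Sum>i<n. \<Sum>j<n. cnj (v i) * (complex_of_real (a i j) * v j))"
  define K where "K = (\<Sum>i<n. (cmod (v i))^2)"
  have "S = (\<Sum>i<n. cnj (v i) * (e * v i))"
    unfolding S_def by (intro sum.cong refl) (simp only: sum_distrib_left[symmetric] eigen lessThan_iff)
  also have "\<dots> = e * (\<Sum>i<n. v i * cnj (v i))"
    by (simp add: sum_distrib_left mult_ac)
  also have "\<dots> = e * complex_of_real K"
    by (simp only: K_def complex_norm_square of_real_sum)
  finally have S_eq: "S = e * complex_of_real K" .
  have Re_term: "Re (cnj z * (complex_of_real c * w)) = c * (Re z * Re w) + c * (Im z * Im w)"
    and Im_term: "Im (cnj z * (complex_of_real c * w)) = c * (Re z * Im w) - c * (Im z * Re w)"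
    for z w c by (simp_all add: algebra_simps)
  have "Re S = (\<Sum>i<n. \<Sum>j<n. a i j * (r i * r j) + a i j * (m i * m j))"
    unfolding S_def r_def m_def by (simp only: Re_sum Re_term)
  also have "\<dots> = (\<Sum>i<n. \<Sum>j<n. r i * a i j * r j) + (\<Sum>i<n. \<Sum>j<n. m i * a i j * m j)"
    by (simp only: sum.distrib[symmetric]) (simp only: mult.commute mult.left_commute)
  finally have "0 \<le> Re S" using psd[of r] psd[of m] by simp
  \<comment> \<open>the imaginary part is antisymmetric in i and j, so symmetry of a makes it vanish\<close>
  have "Im S = (\<Sum>i<n. \<Sum>j<n. a i j * (r i * m j) - a i j * (m i * r j))"
    unfolding S_def r_def m_def by (simp only: Im_sum Im_term)
  also have "\<dots> = (\<Sum>i<n. \<Sum>j<n. a i j * (r i * m j)) - (\<Sum>i<n. \<Sum>j<n. a i j * (m i * r j))"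
    by (simp only: sum_subtractf)
  also have "(\<Sum>i<n. \<Sum>j<n. a i j * (m i * r j)) = (\<Sum>i<n. \<Sum>j<n. a i j * (r i * m j))"
    by (subst sum.swap) (intro sum.cong refl, simp add: sym mult.commute)
  finally have "Im S = 0" by simp
  have "0 < (cmod (v i0))^2" using nonzero by simp
  also have "\<dots> \<le> K" unfolding K_def using nonzero by (intro member_le_sum) auto
  finally have "0 < K" .
  show ?thesis
    using S_eq \<open>Im S = 0\<close> \<open>0 \<le> Re S\<close> \<open>0 < K\<close> by (simp add: zero_le_mult_iff)
qed

lemma sum_diag_mult_commute:
  fixes X Y :: "'a::comm_ring_1 mat"
  assumes "X \<in> carrier_mat n n" "Y \<in> carrier_mat n n"
  shows "(\<Sum>i<n. (X * Y) $$ (i,i)) = (\<Sum>i<n. (Y * X) $$ (i,i))"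
proof -
  have "(\<Sum>i<n. (X * Y) $$ (i,i)) = (\<Sum>i<n. \<Sum>k<n. X $$ (i,k) * Y $$ (k,i))"
    using assms by (intro sum.cong refl) (auto simp: scalar_prod_def lessThan_atLeast0)
  also have "\<dots> = (\<Sum>k<n. \<Sum>i<n. X $$ (i,k) * Y $$ (k,i))" by (rule sum.swap)
  also have "\<dots> = (\<Sum>i<n. (Y * X) $$ (i,i))"
    using assms by (intro sum.cong refl) (auto simp: scalar_prod_def lessThan_atLeast0 mult.commute)
  finally show ?thesis .
qed

lemma sum_diag_similar_mat_wit:
  fixes M B :: "'a::comm_ring_1 mat"
  assumes M: "M \<in> carrier_mat n n" and sim: "similar_mat_wit M B P Q"
  shows "(\<Sum>i<n. M $$ (i,i)) = (\<Sum>i<n. B $$ (i,i))"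
proof -
  have B: "B \<in> carrier_mat n n" and P: "P \<in> carrier_mat n n" and Q: "Q \<in> carrier_mat n n"
    and QP: "Q * P = 1\<^sub>m n" and MPBQ: "M = P * B * Q"
    using similar_mat_witD2[OF M sim] by auto
  have "(\<Sum>i<n. M $$ (i,i)) = (\<Sum>i<n. (Q * (P * B)) $$ (i,i))"
    unfolding MPBQ using B P Q by (intro sum_diag_mult_commute) auto
  also have "Q * (P * B) = B"
    using B P Q QP by (simp add: assoc_mult_mat[symmetric, of Q n n P n B n])
  finally show ?thesis .
qed

lemma diag_mult_upper_triangular:
  fixes B C :: "'a::semiring_0 mat"
  assumes B: "B \<in> carrier_mat n n" "upper_triangular B"
    and C: "C \<in> carrier_mat n n" "upper_triangular C" and i: "i < n"
  shows "(B * C) $$ (i,i) = B $$ (i,i) * C $$ (i,i)"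
proof -
  have "(B * C) $$ (i,i) = (\<Sum>k\<in>{0..<n}. B $$ (i,k) * C $$ (k,i))"
    using B C i by (simp add: scalar_prod_def)
  also have "\<dots> = (\<Sum>k\<in>{0..<n}. if k = i then B $$ (i,i) * C $$ (i,i) else 0)"
  proof (rule sum.cong[OF refl])
    fix k assume "k \<in> {0..<n}"
    then show "B $$ (i,k) * C $$ (k,i) = (if k = i then B $$ (i,i) * C $$ (i,i) else 0)"
      using B C i by (cases k i rule: linorder_cases) (auto simp: upper_triangular_def)
  qed
  also have "\<dots> = B $$ (i,i) * C $$ (i,i)" using i by simp
  finally show ?thesis .
qed

lemma schur_triangularization_sym_psd:
  fixes a :: "nat \<Rightarrow> nat \<Rightarrow> real"
  assumes sym: "\<And>i j. i < n \<Longrightarrow> j < n \<Longrightarrow> a i j = a j i"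
    and psd: "\<And>w :: nat \<Rightarrow> real. 0 \<le> (\<Sum>i<n. \<Sum>j<n. w i * a i j * w j)"
  obtains B P Q and x :: "nat \<Rightarrow> real"
  where "similar_mat_wit (Matrix.mat n n (\<lambda>(i,j). complex_of_real (a i j))) B P Q"
    and "upper_triangular B"
    and "\<And>i. i < n \<Longrightarrow> B $$ (i,i) = complex_of_real (x i)"
    and "\<And>i. i < n \<Longrightarrow> 0 \<le> x i"
proof -
  define M where "M = Matrix.mat n n (\<lambda>(i,j). complex_of_real (a i j))"
  have M: "M \<in> carrier_mat n n" unfolding M_def by simp
  obtain es where cp: "char_poly M = (\<Prod>e\<leftarrow>es. [:- e, 1:])"
    using char_poly_factorized[OF M] by blast
  obtain B P Q where "schur_decomposition M es = (B,P,Q)" by (cases "schur_decomposition M es") auto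
  from schur_decomposition[OF M cp this]
  have sim: "similar_mat_wit M B P Q" and ut: "upper_triangular B" and diag: "diag_mat B = es"
    by auto
  have B: "B \<in> carrier_mat n n" using similar_mat_witD2[OF M sim] by auto
  have diag_eigen: "Im (B $$ (i,i)) = 0 \<and> 0 \<le> Re (B $$ (i,i))" if i: "i < n" for i
  proof -
    define e where "e = B $$ (i,i)"
    have "e \<in> set es" using i B unfolding e_def diag[symmetric] diag_mat_def by auto
    then have "poly (char_poly M) e = 0"
      unfolding cp by (auto simp: poly_prod_list prod_list_zero_iff)
    then obtain v where "eigenvector M v e"
      using eigenvalue_root_char_poly[OF M] unfolding eigenvalue_def by blast
    then have v: "v \<in> carrier_vec n" "v \<noteq> 0\<^sub>v n" and Mv: "M *\<^sub>v v = e \<cdot>\<^sub>v v"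
      using M unfolding eigenvector_def by auto
    have eigen: "(\<Sum>j<n. complex_of_real (a k j) * v $ j) = e * v $ k" if k: "k < n" for k
      using arg_cong[OF Mv, of "\<lambda>w. w $ k"] k v
      by (simp add: M_def scalar_prod_def lessThan_atLeast0)
    obtain i0 where "i0 < n" "v $ i0 \<noteq> 0"
      using v by (metis eq_vecI carrier_vecD index_zero_vec)
    with sym_psd_eigenvalue_real_nonneg[OF sym psd eigen] show ?thesis
      unfolding e_def by blast
  qed
  show ?thesis
  proof
    show "similar_mat_wit (Matrix.mat n n (\<lambda>(i,j). complex_of_real (a i j))) B P Q"
      using sim by (simp add: M_def)
    show "B $$ (i,i) = complex_of_real (Re (B $$ (i,i)))" if "i < n" for i
      using diag_eigen[OF that] by (simp add: complex_eq_iff)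
    show "0 \<le> Re (B $$ (i,i))" if "i < n" for i
      using diag_eigen[OF that] by simp
  qed (rule ut)
qed

lemma spectral_invariants_sym_psd_nat:
  fixes a :: "nat \<Rightarrow> nat \<Rightarrow> real"
  assumes sym: "\<And>i j. i < n \<Longrightarrow> j < n \<Longrightarrow> a i j = a j i"
    and psd: "\<And>w :: nat \<Rightarrow> real. 0 \<le> (\<Sum>i<n. \<Sum>j<n. w i * a i j * w j)"
  obtains x :: "nat \<Rightarrow> real"
  where "\<And>i. i < n \<Longrightarrow> 0 \<le> x i"
    and "(\<Sum>i<n. x i) = (\<Sum>i<n. a i i)"
    and "(\<Sum>i<n. (x i)^2) = (\<Sum>i<n. \<Sum>k<n. a i k * a k i)"
    and "(\<Prod>i<n. x i) = (\<Sum>p\<in>{p. p permutes {..<n}}. of_int (sign p) * (\<Prod>i<n. a i (p i)))"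
proof -
  define M where "M = Matrix.mat n n (\<lambda>(i,j). complex_of_real (a i j))"
  have M: "M \<in> carrier_mat n n" unfolding M_def by simp
  obtain B P Q and x :: "nat \<Rightarrow> real" where sim: "similar_mat_wit M B P Q"
    and ut: "upper_triangular B" and Bx: "\<And>i. i < n \<Longrightarrow> B $$ (i,i) = complex_of_real (x i)"
    and x: "\<And>i. i < n \<Longrightarrow> 0 \<le> x i"
    using schur_triangularization_sym_psd[OF sym psd] unfolding M_def by blast
  have B: "B \<in> carrier_mat n n" using similar_mat_witD2[OF M sim] by auto
  have "complex_of_real (\<Sum>i<n. x i) = (\<Sum>i<n. B $$ (i,i))" by (simp add: Bx)
  also have "\<dots> = (\<Sum>i<n. M $$ (i,i))" by (rule sum_diag_similar_mat_wit[OF M sim, symmetric])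
  also have "\<dots> = complex_of_real (\<Sum>i<n. a i i)" by (simp add: M_def)
  finally have trace: "(\<Sum>i<n. x i) = (\<Sum>i<n. a i i)" by (simp only: of_real_eq_iff)
  have sim2: "similar_mat_wit (M * M) (B * B) P Q"
    using similar_mat_wit_pow[OF sim, of 2] M B by (simp add: numeral_2_eq_2)
  have "complex_of_real (\<Sum>i<n. (x i)^2) = (\<Sum>i<n. (B * B) $$ (i,i))"
    by (simp add: diag_mult_upper_triangular[OF B ut B ut] Bx power2_eq_square)
  also have "\<dots> = (\<Sum>i<n. (M * M) $$ (i,i))"
    using M by (intro sum_diag_similar_mat_wit[OF _ sim2, symmetric]) simp
  also have "\<dots> = complex_of_real (\<Sum>i<n. \<Sum>k<n. a i k * a k i)"
    by (simp add: M_def scalar_prod_def lessThan_atLeast0)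
  finally have trace_square: "(\<Sum>i<n. (x i)^2) = (\<Sum>i<n. \<Sum>k<n. a i k * a k i)"
    by (simp only: of_real_eq_iff)
  have "complex_of_real (\<Prod>i<n. x i) = prod_list (diag_mat B)"
    using B by (simp add: prod_list_diag_prod Bx lessThan_atLeast0)
  also have "\<dots> = Determinant.det B" by (rule det_upper_triangular[OF ut B, symmetric])
  also have "\<dots> = Determinant.det M"
    using sim by (intro det_similar[symmetric]) (auto simp: similar_mat_def)
  also have "\<dots> = (\<Sum>p\<in>{p. p permutes {0..<n}}. of_int (sign p) * (\<Prod>i = 0..<n. M $$ (i, p i)))"
    by (rule det_def'[OF M])
  also have "\<dots> = complex_of_real (\<Sum>p\<in>{p. p permutes {..<n}}. of_int (sign p) * (\<Prod>i<n. a i (p i)))"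
    by (auto simp: M_def lessThan_atLeast0 permutes_in_image intro!: sum.cong prod.cong)
  finally have det: "(\<Prod>i<n. x i) = (\<Sum>p\<in>{p. p permutes {..<n}}. of_int (sign p) * (\<Prod>i<n. a i (p i)))"
    by (simp only: of_real_eq_iff)
  show ?thesis by (rule that[OF x trace trace_square det])
qed

text \<open>The Schur decomposition works with matrices indexed by natural numbers; a bijection \<open>h\<close>
  from \<open>{..<CARD('n)}\<close> onto the index type transfers trace, determinant and quadratic form.\<close>

lemma trace_reindex:
  fixes A :: "'a::comm_semiring_1^'n^'n"
  assumes h: "bij_betw h {..<CARD('n)} (UNIV::'n set)"
  shows "trace A = (\<Sum>i<CARD('n). A $ h i $ h i)"
  unfolding trace_def using sum.reindex_bij_betw[OF h, of "\<lambda>a. A $ a $ a"] by simp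

lemma trace_mult_reindex:
  fixes A B :: "'a::comm_semiring_1^'n^'n"
  assumes h: "bij_betw h {..<CARD('n)} (UNIV::'n set)"
  shows "trace (A ** B) = (\<Sum>i<CARD('n). \<Sum>k<CARD('n). A $ h i $ h k * B $ h k $ h i)"
proof -
  have reindex: "\<And>g. sum g UNIV = (\<Sum>i<CARD('n). g (h i))"
    by (rule sum.reindex_bij_betw[OF h, symmetric])
  show ?thesis
    unfolding trace_reindex[OF h] matrix_matrix_mult_def by (simp only: reindex vec_lambda_beta)
qed

lemma det_reindex:
  fixes A :: "'a::comm_ring_1^'n^'n"
  assumes h: "bij_betw h {..<CARD('n)} (UNIV::'n set)"
  shows "Determinants.det A
         = (\<Sum>p\<in>{p. p permutes {..<CARD('n)}}. of_int (sign p) * (\<Prod>i<CARD('n). A $ h i $ h (p i)))"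
proof -
  let ?N = "{..<CARD('n)}"
  define g where "g = inv_into ?N h"
  have g: "bij_betw g UNIV ?N" unfolding g_def by (rule bij_betw_inv_into[OF h])
  have gh: "g (h i) = i" if "i \<in> ?N" for i
    unfolding g_def using h that by (simp add: bij_betw_inv_into_left)
  have hg: "h (g a) = a" for a
    unfolding g_def using h by (simp add: bij_betw_inv_into_right)
  have inj_h: "inj_on h ?N" using h by (simp add: bij_betw_def)
  define \<phi> where "\<phi> p = map_permutation ?N h p" for p
  have \<phi>: "bij_betw \<phi> {p. p permutes ?N} {q. q permutes (UNIV::'n set)}"
  proof (rule bij_betw_byWitness[where f'="map_permutation UNIV g"])
    show "\<forall>p\<in>{p. p permutes ?N}. map_permutation UNIV g (\<phi> p) = p"
      unfolding \<phi>_def using map_permutation_compose_inv[OF h _ gh] by blast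
    show "\<forall>q\<in>{q. q permutes (UNIV::'n set)}. \<phi> (map_permutation UNIV g q) = q"
      unfolding \<phi>_def using map_permutation_compose_inv[OF g _ hg] by blast
    show "\<phi> ` {p. p permutes ?N} \<subseteq> {q. q permutes UNIV}"
      unfolding \<phi>_def using map_permutation_permutes[OF h] by blast
    show "map_permutation UNIV g ` {q. q permutes UNIV} \<subseteq> {p. p permutes ?N}"
      using map_permutation_permutes[OF g] by blast
  qed
  have "Determinants.det A = (\<Sum>q\<in>{q. q permutes (UNIV::'n set)}. of_int (sign q) * (\<Prod>a\<in>UNIV. A $ a $ q a))"
    unfolding Determinants.det_def by simp
  also have "\<dots> = (\<Sum>p\<in>{p. p permutes ?N}. of_int (sign (\<phi> p)) * (\<Prod>a\<in>UNIV. A $ a $ \<phi> p a))"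
    by (rule sum.reindex_bij_betw[OF \<phi>, symmetric])
  also have "\<dots> = (\<Sum>p\<in>{p. p permutes ?N}. of_int (sign p) * (\<Prod>i\<in>?N. A $ h i $ h (p i)))"
  proof (rule sum.cong[OF refl])
    fix p assume "p \<in> {p. p permutes ?N}"
    then have p: "p permutes ?N" by simp
    have "sign (\<phi> p) = sign p" unfolding \<phi>_def by (rule sign_map_permutation[OF inj_h p]) simp
    moreover have "(\<Prod>a\<in>UNIV. A $ a $ \<phi> p a) = (\<Prod>i\<in>?N. A $ h i $ \<phi> p (h i))"
      by (rule prod.reindex_bij_betw[OF h, symmetric])
    moreover have "\<phi> p (h i) = h (p i)" if "i \<in> ?N" for i
      unfolding \<phi>_def using that by (simp add: map_permutation_apply[OF inj_h])
    ultimately show "of_int (sign (\<phi> p)) * (\<Prod>a\<in>UNIV. A $ a $ \<phi> p a)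
                     = of_int (sign p) * (\<Prod>i\<in>?N. A $ h i $ h (p i))"
      by simp
  qed
  finally show ?thesis .
qed

lemma psd_reindex:
  fixes A :: "real^'n^'n" and w :: "nat \<Rightarrow> real"
  assumes h: "bij_betw h {..<CARD('n)} (UNIV::'n set)" and "psd A"
  shows "0 \<le> (\<Sum>i<CARD('n). \<Sum>j<CARD('n). w i * A $ h i $ h j * w j)"
proof -
  define g where "g = inv_into {..<CARD('n)} h"
  have gh: "g (h i) = i" if "i < CARD('n)" for i
    unfolding g_def using h that by (simp add: bij_betw_inv_into_left)
  have reindex: "\<And>f. sum f UNIV = (\<Sum>i<CARD('n). f (h i))"
    by (rule sum.reindex_bij_betw[OF h, symmetric])
  define x :: "real^'n" where "x = (\<chi> a. w (g a))"
  have "0 \<le> x \<bullet> (A *v x)" using \<open>psd A\<close> unfolding psd_def by blast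
  also have "x \<bullet> (A *v x) = (\<Sum>a\<in>UNIV. \<Sum>b\<in>UNIV. x $ a * A $ a $ b * x $ b)"
    unfolding inner_vec_def matrix_vector_mult_def by (simp add: sum_distrib_left mult.assoc)
  also have "\<dots> = (\<Sum>i<CARD('n). \<Sum>j<CARD('n). w i * A $ h i $ h j * w j)"
    unfolding x_def by (simp only: reindex vec_lambda_beta) (auto simp: gh intro!: sum.cong)
  finally show ?thesis .
qed

lemma hs_norm_sq_diff_mat_one:
  fixes A :: "real^'n^'n"
  assumes "Finite_Cartesian_Product.transpose A = A"
  shows "hs_norm_sq (A - Finite_Cartesian_Product.mat 1) = trace (A ** A) - 2 * trace A + real CARD('n)"
proof -
  let ?I = "Finite_Cartesian_Product.mat 1 :: real^'n^'n"
  have distrib: "X ** (Y - Z) = X ** Y - X ** Z" "(Y - Z) ** X = Y ** X - Z ** X"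
    for X Y Z :: "real^'n^'n"
    by (vector matrix_matrix_mult_def sum_subtractf[symmetric] field_simps)+
  have "Finite_Cartesian_Product.transpose (A - ?I)
        = Finite_Cartesian_Product.transpose A - Finite_Cartesian_Product.transpose ?I"
    by (simp add: transpose_def Finite_Cartesian_Product.vec_eq_iff)
  then have "Finite_Cartesian_Product.transpose (A - ?I) = A - ?I"
    using assms by (simp only: transpose_mat)
  then have "hs_norm_sq (A - ?I) = trace ((A - ?I) ** (A - ?I))"
    unfolding hs_norm_sq_def by simp
  also have "(A - ?I) ** (A - ?I) = A ** A - A - A + ?I"
    by (simp add: distrib)
  also have "trace (A ** A - A - A + ?I) = trace (A ** A) - 2 * trace A + trace ?I"
    by (simp only: trace_add trace_sub mult_2 diff_diff_eq)
  finally show ?thesis by (simp add: trace_I)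
qed

lemma spectral_invariants_sym_psd:
  fixes A :: "real^'n^'n"
  assumes "Finite_Cartesian_Product.transpose A = A" and "psd A"
  obtains x :: "nat \<Rightarrow> real"
  where "\<And>i. i < CARD('n) \<Longrightarrow> 0 \<le> x i"
    and "trace A = (\<Sum>i<CARD('n). x i)"
    and "trace (A ** A) = (\<Sum>i<CARD('n). (x i)^2)"
    and "Determinants.det A = (\<Prod>i<CARD('n). x i)"
proof -
  obtain h where h: "bij_betw h {..<CARD('n)} (UNIV::'n set)"
    using ex_bij_betw_nat_finite[of "UNIV::'n set"] by (auto simp: lessThan_atLeast0)
  define a where "a i j = A $ h i $ h j" for i j
  have sym: "a i j = a j i" if "i < CARD('n)" "j < CARD('n)" for i j
    using arg_cong[OF assms(1), of "\<lambda>B. B $ h i $ h j"] by (simp add: a_def transpose_def)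
  have psd: "0 \<le> (\<Sum>i<CARD('n). \<Sum>j<CARD('n). w i * a i j * w j)" for w
    unfolding a_def by (rule psd_reindex[OF h assms(2)])
  obtain x where x: "\<And>i. i < CARD('n) \<Longrightarrow> 0 \<le> x i"
    and trace: "(\<Sum>i<CARD('n). x i) = (\<Sum>i<CARD('n). a i i)"
    and trace_square: "(\<Sum>i<CARD('n). (x i)^2) = (\<Sum>i<CARD('n). \<Sum>k<CARD('n). a i k * a k i)"
    and det: "(\<Prod>i<CARD('n). x i)
              = (\<Sum>p\<in>{p. p permutes {..<CARD('n)}}. of_int (sign p) * (\<Prod>i<CARD('n). a i (p i)))"
    using spectral_invariants_sym_psd_nat[OF sym psd] by blast
  show ?thesis
  proof (rule that[OF x])
    show "trace A = (\<Sum>i<CARD('n). x i)"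
      by (simp only: trace_reindex[OF h] trace a_def)
    show "trace (A ** A) = (\<Sum>i<CARD('n). (x i)^2)"
      by (simp only: trace_mult_reindex[OF h] trace_square a_def)
    show "Determinants.det A = (\<Prod>i<CARD('n). x i)"
      by (simp only: det_reindex[OF h] det a_def)
  qed
qed

theorem propositionA1:
  fixes A :: "real^'n^'n" and \<eta> :: real
  assumes "CARD('n) \<ge> 2"
    and "0 < \<eta>" and "\<eta> \<le> 1/4"
    and "Finite_Cartesian_Product.transpose A = A"
    and "psd A"
    and "Determinants.det A \<ge> (1 - sqrt \<eta>)^2"
    and "trace A \<le> real CARD('n) * (1 + \<eta>) powr (2 / real CARD('n))"
  shows "hs_norm_sq (A - Finite_Cartesian_Product.mat 1) \<le>
    4 * (real CARD('n) - 1)^2 * sqrt \<eta> * (1 + (real CARD('n) + 10) / real CARD('n) * sqrt \<eta>)"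
proof -
  obtain x where x: "\<And>i. i < CARD('n) \<Longrightarrow> 0 \<le> x i"
    and trace: "trace A = (\<Sum>i<CARD('n). x i)"
    and trace_square: "trace (A ** A) = (\<Sum>i<CARD('n). (x i)^2)"
    and det: "Determinants.det A = (\<Prod>i<CARD('n). x i)"
    using spectral_invariants_sym_psd[OF assms(4,5)] by blast
  have "hs_norm_sq (A - Finite_Cartesian_Product.mat 1) = (\<Sum>i<CARD('n). (x i - 1)^2)"
    by (simp add: hs_norm_sq_diff_mat_one[OF assms(4)] trace trace_square power2_diff
        sum.distrib sum_subtractf sum_distrib_left)
  also have "\<dots> \<le> 4 * (real CARD('n) - 1)^2 * sqrt \<eta>
                    * (1 + (real CARD('n) + 10) / real CARD('n) * sqrt \<eta>)"
    using assms(6,7) by (intro sum_power2_diff_one_le[OF assms(1-3) x]) (simp_all add: trace det)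
  finally show ?thesis .
qed

end
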